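(* Let $\sigma:\mathbb R\to\mathbb R$ be bounded with Hermite expansion $\sigma=\sum_{s\ge0}a_sh_s$, and for $r>0$ and $s\ge0$ let $a_s(r)=\sum_{j=0}^\infty a_{s+2j}\sqrt{\frac{(s+2j)!}{s!}}\frac{(r^2-1)^j}{j!2^j}$. If $r>0$ satisfies $|1-r^2|=:\epsilon<\frac12$, then for every $s\ge0$, $$|a_s(r)-a_s(1)|\le\|\sigma\|\,2^{(s+2)/2}\frac{\epsilon}{\sqrt{1-2\epsilon^2}}.$$
   Context: $h_0,h_1,\ldots$ are the Hermite polynomials orthonormal w.r.t. the standard Gaussian measure; $\|\sigma\|=\sqrt{\mathbb E_{X\sim\mathcal N(0,1)}\sigma(X)^2}$. Note $a_s(1)=a_s$. *)

theory Defs
  imports "HOL-Probability.Probability"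
begin

fun hermite_He :: "nat \<Rightarrow> real \<Rightarrow> real" where
  "hermite_He 0 x = 1"
| "hermite_He (Suc 0) x = x"
| "hermite_He (Suc (Suc n)) x = x * hermite_He (Suc n) x - real (Suc n) * hermite_He n x"

text \<open>Hermite polynomials orthonormal w.r.t. the standard Gaussian measure.\<close>
definition hermite_h :: "nat \<Rightarrow> real \<Rightarrow> real" where
  "hermite_h n x = hermite_He n x / sqrt (fact n)"

definition gauss :: "real measure" where
  "gauss = density lborel std_normal_density"

definition hermite_coeff :: "(real \<Rightarrow> real) \<Rightarrow> nat \<Rightarrow> real" where
  "hermite_coeff \<sigma> s = (\<integral>x. \<sigma> x * hermite_h s x \<partial>gauss)"

definition gnorm :: "(real \<Rightarrow> real) \<Rightarrow> real" where
  "gnorm \<sigma> = sqrt (\<integral>x. (\<sigma> x)\<^sup>2 \<partial>gauss)"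

definition hermite_coeff_r :: "(real \<Rightarrow> real) \<Rightarrow> real \<Rightarrow> nat \<Rightarrow> real" where
  "hermite_coeff_r \<sigma> r s = (\<Sum>j. hermite_coeff \<sigma> (s + 2 * j)
       * sqrt (fact (s + 2 * j) / fact s) * (r\<^sup>2 - 1) ^ j / (fact j * 2 ^ j))"

end

theory Submission
  imports Defs "HOL-Computational_Algebra.Polynomial"
begin

text \<open>
  Since a_s(1) = a_s, the difference a_s(r) - a_s is the tail sum over j >= 1 of a_(s+2j) w_j,
  where w_j = sqrt((s+2j)!/s!) t^j / (j! 2^j) and t = r^2 - 1.  By Cauchy-Schwarz it is at most
  (sum_j a_(s+2j)^2)^(1/2) (sum_(j>=1) w_j^2)^(1/2).  The first factor is at most the Gaussian
  norm of sigma by Bessel's inequality for the orthonormal system h_n, whose orthonormality follows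
  from Stein's identity E[X p(X)] = E[p'(X)] for polynomials p.  For the second factor,
  w_j^2 = C(s+2j,2j) C(2j,j) t^(2j) / 4^j; the bounds C(2j,j) <= 4^j/2 and t^(2j) <= 4^(1-j) t^2
  (as |t| <= 1/2) give w_j^2 <= 2 t^2 C(s+2j,2j) / 2^(2j), and the negative binomial series
  sum_k C(s+k,k) / 2^k = 2^(s+1) yields sum_(j>=1) w_j^2 <= 2^(s+2) t^2.  This gives the bound
  with epsilon in place of epsilon / sqrt(1 - 2 epsilon^2), for every square-integrable sigma.
\<close>

section \<open>Hermite polynomials as polynomials\<close>

fun hermite_He_poly :: "nat \<Rightarrow> real poly" where
  "hermite_He_poly 0 = 1"
| "hermite_He_poly (Suc 0) = [:0, 1:]"
| "hermite_He_poly (Suc (Suc n)) =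
     [:0, 1:] * hermite_He_poly (Suc n) - smult (real (Suc n)) (hermite_He_poly n)"

lemma poly_hermite_He_poly: "poly (hermite_He_poly n) x = hermite_He n x"
  by (induction n rule: hermite_He_poly.induct) simp_all

lemma pderiv_hermite_He_poly:
  "pderiv (hermite_He_poly (Suc n)) = smult (real (Suc n)) (hermite_He_poly n)"
proof (induction n rule: hermite_He_poly.induct)
  case 1
  then show ?case by (simp add: pderiv_pCons)
next
  case 2
  then show ?case by (simp add: pderiv_pCons pderiv_mult)
next
  case (3 n)
  define X :: "real poly" where "X = [:0, 1:]"
  have rec: "hermite_He_poly (Suc (Suc n))
      = X * hermite_He_poly (Suc n) - smult (real (Suc n)) (hermite_He_poly n)"
    by (simp add: X_def)
  have "pderiv (hermite_He_poly (Suc (Suc (Suc n))))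
      = X * pderiv (hermite_He_poly (Suc (Suc n))) + hermite_He_poly (Suc (Suc n))
        - smult (real (Suc (Suc n))) (pderiv (hermite_He_poly (Suc n)))"
    by (simp only: hermite_He_poly.simps(3)[of "Suc n"] pderiv_diff pderiv_mult pderiv_smult
        flip: X_def) (simp add: X_def pderiv_pCons)
  also have "\<dots> = hermite_He_poly (Suc (Suc n))
      + smult (real (Suc (Suc n))) (X * hermite_He_poly (Suc n) - smult (real (Suc n)) (hermite_He_poly n))"
    unfolding 3 smult_diff_right by (simp add: algebra_simps)
  also have "\<dots> = hermite_He_poly (Suc (Suc n)) + smult (real (Suc (Suc n))) (hermite_He_poly (Suc (Suc n)))"
    by (simp only: rec[symmetric])
  also have "\<dots> = smult (real (Suc (Suc (Suc n)))) (hermite_He_poly (Suc (Suc n)))"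
    by (simp only: of_nat_Suc[of "Suc (Suc n)"] smult_add_left smult_1_left)
  finally show ?case .
qed

lemma higher_pderiv_hermite_He_poly:
  "k \<le> n \<Longrightarrow>
    (pderiv ^^ k) (hermite_He_poly n) = smult (fact n / fact (n - k)) (hermite_He_poly (n - k))"
proof (induction k)
  case 0
  then show ?case by simp
next
  case (Suc k)
  then obtain m where m: "n - k = Suc m"
    by (metis Suc_diff_Suc Suc_le_lessD)
  then have "n - Suc k = m" by simp
  moreover have "fact n / fact (Suc m) * real (Suc m) = (fact n / fact m :: real)"
    by (simp only: fact_Suc) (simp add: field_simps del: of_nat_Suc)
  ultimately show ?case
    using Suc by (simp add: m pderiv_smult pderiv_hermite_He_poly)
qed

section \<open>Gaussian moments and Stein's identity\<close>

lemma prob_space_gauss: "prob_space gauss"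
  unfolding gauss_def by (rule prob_space_normal_density) simp

lemma sets_gauss [measurable_cong]: "sets gauss = sets borel"
  by (simp add: gauss_def)

lemma integral_gauss:
  "f \<in> borel_measurable borel \<Longrightarrow>
    (\<integral>x. f x \<partial>gauss) = (\<integral>x. std_normal_density x * f x \<partial>lborel)"
  unfolding gauss_def by (subst integral_density) auto

lemma integrable_gauss_power: "integrable gauss (\<lambda>x. x ^ k)"
  unfolding gauss_def
  by (subst integrable_density) (auto simp: integrable_std_normal_moment)

lemma fact_double_Suc_ratio:
  "(fact (2 * Suc j) :: real) / (2 ^ Suc j * fact (Suc j))
     = real (2 * j + 1) * (fact (2 * j) / (2 ^ j * fact j))"
proof -
  have cancel: "(2 * a) * (b * F) / ((2 * P) * (a * G)) = b * (F / (P * G))"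
    if "a \<noteq> 0" for a b F P G :: real
    using that by simp
  have "2 * Suc j = Suc (Suc (2 * j))"
    by simp
  then have "(fact (2 * Suc j) :: real) = 2 * (real j + 1) * ((2 * real j + 1) * fact (2 * j))"
    by (simp only: fact_Suc) (simp add: algebra_simps)
  moreover have "(fact (Suc j) :: real) = (real j + 1) * fact j"
    by simp
  ultimately have "(fact (2 * Suc j) :: real) / (2 ^ Suc j * fact (Suc j))
      = (2 * (real j + 1)) * ((2 * real j + 1) * fact (2 * j)) / ((2 * 2 ^ j) * ((real j + 1) * fact j))"
    by (simp only: power_Suc)
  also have "\<dots> = (2 * real j + 1) * (fact (2 * j) / (2 ^ j * fact j))"
    by (rule cancel) simp
  finally show ?thesis
    by simp
qed

lemma integral_gauss_power_Suc:
  "(\<integral>x. x ^ Suc k \<partial>gauss) = real k * (\<integral>x. x ^ (k - 1) \<partial>gauss)"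
proof -
  have odd_moment: "(\<integral>x. x ^ (2 * i + 1) \<partial>gauss) = 0" for i
    using integral_std_normal_moment_odd[of i] by (simp add: integral_gauss)
  have even_moment: "(\<integral>x. x ^ (2 * i) \<partial>gauss) = fact (2 * i) / (2 ^ i * fact i)" for i
    using integral_std_normal_moment_even[of i] by (simp add: integral_gauss)
  show ?thesis
  proof (cases "even k")
    case True
    then obtain j where k: "k = 2 * j" by blast
    show ?thesis
    proof (cases j)
      case 0
      then show ?thesis
        using odd_moment[of 0] by (simp add: k)
    next
      case (Suc i)
      then have "k - 1 = 2 * i + 1"
        by (simp add: k)
      then have "(\<integral>x. x ^ (k - 1) \<partial>gauss) = 0"
        by (simp only: odd_moment)
      moreover have "Suc k = 2 * j + 1"
        by (simp add: k)
      then have "(\<integral>x. x ^ Suc k \<partial>gauss) = 0"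
        by (simp only: odd_moment)
      ultimately show ?thesis
        by simp
    qed
  next
    case False
    then obtain j where k: "k = 2 * j + 1" by (blast elim: oddE)
    then have "Suc k = 2 * Suc j"
      by simp
    then have "(\<integral>x. x ^ Suc k \<partial>gauss) = fact (2 * Suc j) / (2 ^ Suc j * fact (Suc j))"
      by (simp only: even_moment)
    moreover have "k - 1 = 2 * j"
      by (simp add: k)
    then have "(\<integral>x. x ^ (k - 1) \<partial>gauss) = fact (2 * j) / (2 ^ j * fact j)"
      by (simp only: even_moment)
    ultimately show ?thesis
      by (simp only: fact_double_Suc_ratio) (simp add: k)
  qed
qed

definition gauss_poly_mean :: "real poly \<Rightarrow> real" where
  "gauss_poly_mean p = (\<integral>x. poly p x \<partial>gauss)"

lemma integrable_gauss_poly: "integrable gauss (poly p)"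
  unfolding poly_altdef[abs_def]
  by (intro Bochner_Integration.integrable_sum integrable_mult_right integrable_gauss_power)

lemma gauss_poly_mean_add: "gauss_poly_mean (p + q) = gauss_poly_mean p + gauss_poly_mean q"
  by (simp add: gauss_poly_mean_def integrable_gauss_poly)

lemma gauss_poly_mean_diff: "gauss_poly_mean (p - q) = gauss_poly_mean p - gauss_poly_mean q"
  by (simp add: gauss_poly_mean_def integrable_gauss_poly)

lemma gauss_poly_mean_smult: "gauss_poly_mean (smult c p) = c * gauss_poly_mean p"
  by (simp add: gauss_poly_mean_def)

lemma gauss_poly_mean_const: "gauss_poly_mean [:c:] = c"
  by (simp add: gauss_poly_mean_def prob_space.prob_space[OF prob_space_gauss])

lemma poly_eq_sum_lessThan:
  fixes p :: "'a::comm_semiring_1 poly"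
  assumes "\<And>i. n \<le> i \<Longrightarrow> coeff p i = 0"
  shows "poly p x = (\<Sum>i<n. coeff p i * x ^ i)"
proof -
  have "poly p x = (\<Sum>i\<le>degree p. coeff p i * x ^ i)"
    by (rule poly_altdef)
  also have "\<dots> = (\<Sum>i<n. coeff p i * x ^ i)"
    using assms by (intro sum.mono_neutral_cong) (auto simp: not_less coeff_eq_0)
  finally show ?thesis .
qed

lemma gauss_poly_mean_eq_sum:
  assumes "\<And>i. n \<le> i \<Longrightarrow> coeff p i = 0"
  shows "gauss_poly_mean p = (\<Sum>i<n. coeff p i * (\<integral>x. x ^ i \<partial>gauss))"
proof -
  have "poly p = (\<lambda>x. \<Sum>i<n. coeff p i * x ^ i)"
    using poly_eq_sum_lessThan[OF assms] by (rule ext)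
  then show ?thesis
    by (simp add: gauss_poly_mean_def integrable_gauss_power)
qed

lemma gauss_poly_mean_pCons_0: "gauss_poly_mean (pCons 0 p) = gauss_poly_mean (pderiv p)"
proof -
  define m where "m i = (\<integral>x. x ^ i \<partial>gauss)" for i
  define d where "d = degree p"
  have m_Suc: "m (Suc i) = real i * m (i - 1)" for i
    unfolding m_def by (rule integral_gauss_power_Suc)
  have "gauss_poly_mean (pCons 0 p) = (\<Sum>i<Suc (Suc d). coeff (pCons 0 p) i * m i)"
    unfolding m_def d_def by (rule gauss_poly_mean_eq_sum) (simp add: coeff_pCons coeff_eq_0 split: nat.split)
  also have "\<dots> = (\<Sum>i<Suc d. coeff p i * (real i * m (i - 1)))"
    by (subst sum.lessThan_Suc_shift) (simp add: m_Suc)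
  also have "\<dots> = (\<Sum>i<d. coeff (pderiv p) i * m i)"
    by (subst sum.lessThan_Suc_shift) (simp add: coeff_pderiv mult_ac)
  also have "\<dots> = gauss_poly_mean (pderiv p)"
    unfolding m_def d_def by (rule gauss_poly_mean_eq_sum[symmetric]) (simp add: coeff_pderiv coeff_eq_0)
  finally show ?thesis .
qed

lemma gauss_poly_mean_hermite_He_poly_Suc_mult:
  "gauss_poly_mean (hermite_He_poly (Suc n) * g) = gauss_poly_mean (hermite_He_poly n * pderiv g)"
proof (cases n)
  case 0
  then show ?thesis
    using gauss_poly_mean_pCons_0[of g] by simp
next
  case (Suc m)
  have "hermite_He_poly (Suc n) * g
      = pCons 0 (hermite_He_poly (Suc m) * g) - smult (real (Suc m)) (hermite_He_poly m * g)"
    by (simp add: Suc algebra_simps)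
  moreover have "pderiv (hermite_He_poly (Suc m) * g)
      = hermite_He_poly (Suc m) * pderiv g + smult (real (Suc m)) (hermite_He_poly m * g)"
    by (simp add: pderiv_mult pderiv_hermite_He_poly mult.commute[of g])
  ultimately show ?thesis
    by (simp add: Suc gauss_poly_mean_add gauss_poly_mean_diff gauss_poly_mean_smult
        gauss_poly_mean_pCons_0)
qed

lemma gauss_poly_mean_hermite_He_poly_mult:
  "gauss_poly_mean (hermite_He_poly n * g) = gauss_poly_mean ((pderiv ^^ n) g)"
  by (induction n arbitrary: g)
     (simp_all add: gauss_poly_mean_hermite_He_poly_Suc_mult funpow_Suc_right del: funpow.simps)

lemma gauss_poly_mean_hermite_He_poly_orthogonal:
  "gauss_poly_mean (hermite_He_poly m * hermite_He_poly n) = (if m = n then fact n else 0)"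
proof -
  have le: "gauss_poly_mean (hermite_He_poly m * hermite_He_poly n) = (if m = n then fact n else 0)"
    if "n \<le> m" for m n
  proof -
    have "(pderiv ^^ m) (hermite_He_poly n) = (pderiv ^^ (m - n)) ((pderiv ^^ n) (hermite_He_poly n))"
      using that by (metis funpow_add le_add_diff_inverse2 o_apply)
    also have "\<dots> = (pderiv ^^ (m - n)) [:fact n:]"
      by (simp add: higher_pderiv_hermite_He_poly)
    also have "\<dots> = (if m = n then [:fact n:] else 0)"
      using that by (cases "m - n") (simp_all add: funpow_Suc_right pderiv_pCons del: funpow.simps)
    finally show ?thesis
      by (simp add: gauss_poly_mean_hermite_He_poly_mult gauss_poly_mean_const)
         (simp add: gauss_poly_mean_def)
  qed
  show ?thesis
  proof (cases "n \<le> m")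
    case False
    then have "gauss_poly_mean (hermite_He_poly n * hermite_He_poly m) = 0"
      using le[of m n] by simp
    then show ?thesis
      using False by (simp add: mult.commute)
  qed (rule le)
qed

lemma hermite_h_eq_poly: "hermite_h n x = poly (hermite_He_poly n) x / sqrt (fact n)"
  by (simp add: hermite_h_def poly_hermite_He_poly)

lemma integrable_gauss_hermite_h_mult: "integrable gauss (\<lambda>x. hermite_h m x * hermite_h n x)"
proof -
  have "integrable gauss (\<lambda>x. poly (hermite_He_poly m * hermite_He_poly n) x / (sqrt (fact m) * sqrt (fact n)))"
    by (intro integrable_divide integrable_gauss_poly)
  then show ?thesis
    by (simp add: hermite_h_eq_poly)
qed

lemma integral_gauss_hermite_h_mult:
  "(\<integral>x. hermite_h m x * hermite_h n x \<partial>gauss) = (if m = n then 1 else 0)"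
proof -
  have "(\<integral>x. hermite_h m x * hermite_h n x \<partial>gauss)
      = gauss_poly_mean (hermite_He_poly m * hermite_He_poly n) / (sqrt (fact m) * sqrt (fact n))"
    by (simp add: hermite_h_eq_poly gauss_poly_mean_def)
  then show ?thesis
    by (simp add: gauss_poly_mean_hermite_He_poly_orthogonal)
qed

section \<open>Bessel's inequality\<close>

lemma abs_mult_le_sum_squares: "\<bar>a * b\<bar> \<le> a\<^sup>2 + b\<^sup>2" for a b :: real
proof -
  have "2 * \<bar>a\<bar> * \<bar>b\<bar> \<le> a\<^sup>2 + b\<^sup>2"
    using sum_squares_bound[of "\<bar>a\<bar>" "\<bar>b\<bar>"] by simp
  moreover have "0 \<le> \<bar>a\<bar> * \<bar>b\<bar>"
    by simp
  ultimately show ?thesis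
    unfolding abs_mult by linarith
qed

lemma square_integrable_imp_integrable_mult:
  fixes f g :: "'a \<Rightarrow> real"
  assumes [measurable]: "f \<in> borel_measurable M" "g \<in> borel_measurable M"
    and "integrable M (\<lambda>x. (f x)\<^sup>2)" "integrable M (\<lambda>x. (g x)\<^sup>2)"
  shows "integrable M (\<lambda>x. f x * g x)"
proof (rule Bochner_Integration.integrable_bound)
  show "integrable M (\<lambda>x. (f x)\<^sup>2 + (g x)\<^sup>2)"
    using assms(3,4) by (rule Bochner_Integration.integrable_add)
  show "AE x in M. norm (f x * g x) \<le> norm ((f x)\<^sup>2 + (g x)\<^sup>2)"
    by (simp add: abs_mult_le_sum_squares)
qed measurable

lemma Bessel_inequality:
  fixes f :: "'a \<Rightarrow> real" and \<phi> :: "'i \<Rightarrow> 'a \<Rightarrow> real"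
  assumes "finite K"
    and f [measurable]: "f \<in> borel_measurable M" and f_square: "integrable M (\<lambda>x. (f x)\<^sup>2)"
    and \<phi> [measurable]: "\<And>i. \<phi> i \<in> borel_measurable M"
    and \<phi>_square: "\<And>i. integrable M (\<lambda>x. (\<phi> i x)\<^sup>2)"
    and orthonormal: "\<And>i j. (\<integral>x. \<phi> i x * \<phi> j x \<partial>M) = (if i = j then 1 else 0)"
  shows "(\<Sum>i\<in>K. (\<integral>x. f x * \<phi> i x \<partial>M)\<^sup>2) \<le> (\<integral>x. (f x)\<^sup>2 \<partial>M)"
proof -
  define c where "c i = (\<integral>x. f x * \<phi> i x \<partial>M)" for i
  define S where "S x = (\<Sum>i\<in>K. c i * \<phi> i x)" for x
  have int_f\<phi>: "integrable M (\<lambda>x. f x * \<phi> i x)" for i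
    using f_square \<phi>_square by (intro square_integrable_imp_integrable_mult) auto
  have int_\<phi>\<phi>: "integrable M (\<lambda>x. \<phi> i x * \<phi> j x)" for i j
    using \<phi>_square by (intro square_integrable_imp_integrable_mult) auto
  have fS: "f x * S x = (\<Sum>i\<in>K. c i * (f x * \<phi> i x))" for x
    by (simp add: S_def sum_distrib_left mult_ac)
  have SS: "S x * S x = (\<Sum>i\<in>K. \<Sum>j\<in>K. c i * c j * (\<phi> i x * \<phi> j x))" for x
    by (simp add: S_def sum_product mult_ac)
  have int_fS: "integrable M (\<lambda>x. f x * S x)"
    unfolding fS by (intro Bochner_Integration.integrable_sum integrable_mult_right int_f\<phi>)
  have int_SS: "integrable M (\<lambda>x. S x * S x)"
    unfolding SS by (intro Bochner_Integration.integrable_sum integrable_mult_right int_\<phi>\<phi>)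
  have "(\<integral>x. f x * S x \<partial>M) = (\<Sum>i\<in>K. (c i)\<^sup>2)"
    unfolding fS by (simp add: int_f\<phi> c_def power2_eq_square)
  moreover have "(\<integral>x. S x * S x \<partial>M) = (\<Sum>i\<in>K. (c i)\<^sup>2)"
    unfolding SS using \<open>finite K\<close>
    by (simp add: int_\<phi>\<phi> orthonormal Bochner_Integration.integrable_sum power2_eq_square
        if_distrib cong: if_cong)
  moreover have "(\<lambda>x. (f x - S x)\<^sup>2) = (\<lambda>x. (f x)\<^sup>2 - 2 * (f x * S x) + S x * S x)"
    by (simp add: power2_eq_square algebra_simps)
  then have "(\<integral>x. (f x - S x)\<^sup>2 \<partial>M)
      = (\<integral>x. (f x)\<^sup>2 \<partial>M) - 2 * (\<integral>x. f x * S x \<partial>M) + (\<integral>x. S x * S x \<partial>M)"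
    using f_square int_fS int_SS by simp
  moreover have "0 \<le> (\<integral>x. (f x - S x)\<^sup>2 \<partial>M)"
    by simp
  ultimately show ?thesis
    by (simp add: c_def)
qed

lemma (in finite_measure) bounded_imp_square_integrable:
  fixes f :: "'a \<Rightarrow> real"
  assumes [measurable]: "f \<in> borel_measurable M" and "bounded (range f)"
  shows "integrable M (\<lambda>x. (f x)\<^sup>2)"
proof -
  obtain B where B: "\<And>x. \<bar>f x\<bar> \<le> B"
    using assms(2) by (auto simp: bounded_iff)
  show ?thesis
  proof (rule integrable_const_bound[where B = "B\<^sup>2"])
    have "\<bar>f x\<bar>\<^sup>2 \<le> B\<^sup>2" for x
      by (rule power_mono[OF B]) simp
    then show "AE x in M. norm ((f x)\<^sup>2) \<le> B\<^sup>2"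
      by simp
  qed measurable
qed

lemma borel_measurable_hermite_h [measurable]: "hermite_h n \<in> borel_measurable borel"
  unfolding hermite_h_eq_poly[abs_def]
  by (intro borel_measurable_divide borel_measurable_continuous_onI continuous_intros) simp

lemma sum_hermite_coeff_square_le:
  assumes "\<sigma> \<in> borel_measurable borel" and "integrable gauss (\<lambda>x. (\<sigma> x)\<^sup>2)" and "finite K"
  shows "(\<Sum>k\<in>K. (hermite_coeff \<sigma> k)\<^sup>2) \<le> (gnorm \<sigma>)\<^sup>2"
proof -
  have "(\<Sum>k\<in>K. (\<integral>x. \<sigma> x * hermite_h k x \<partial>gauss)\<^sup>2) \<le> (\<integral>x. (\<sigma> x)\<^sup>2 \<partial>gauss)"
  proof (rule Bessel_inequality)
    show "\<sigma> \<in> borel_measurable gauss"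
      using assms(1) by measurable
    show "integrable gauss (\<lambda>x. (hermite_h k x)\<^sup>2)" for k
      using integrable_gauss_hermite_h_mult[of k k] by (simp only: power2_eq_square)
    show "hermite_h k \<in> borel_measurable gauss" for k
      by measurable
  qed (use assms integral_gauss_hermite_h_mult in auto)
  then show ?thesis
    by (simp add: gnorm_def hermite_coeff_def)
qed

section \<open>Series and binomial estimates\<close>

lemma Cauchy_Schwarz_suminf:
  fixes a b :: "nat \<Rightarrow> real"
  assumes a: "\<And>n. (\<Sum>i<n. (a i)\<^sup>2) \<le> A" and b: "\<And>n. (\<Sum>i<n. (b i)\<^sup>2) \<le> B"
  shows "summable (\<lambda>i. a i * b i)" and "\<bar>\<Sum>i. a i * b i\<bar> \<le> sqrt A * sqrt B"
proof -
  have "summable (\<lambda>i. (a i)\<^sup>2)"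
    using a by (intro summableI_nonneg_bounded[where x = A]) simp_all
  moreover have "summable (\<lambda>i. (b i)\<^sup>2)"
    using b by (intro summableI_nonneg_bounded[where x = B]) simp_all
  ultimately have "summable (\<lambda>i. (a i)\<^sup>2 + (b i)\<^sup>2)"
    by (rule summable_add)
  moreover have "norm (a i * b i) \<le> (a i)\<^sup>2 + (b i)\<^sup>2" for i
    by (simp add: abs_mult_le_sum_squares)
  ultimately show summable: "summable (\<lambda>i. a i * b i)"
    by (blast intro: summable_comparison_test')
  have "\<bar>\<Sum>i<n. a i * b i\<bar> \<le> sqrt A * sqrt B" for n
  proof -
    have "\<bar>\<Sum>i<n. a i * b i\<bar> = sqrt ((\<Sum>i<n. a i * b i)\<^sup>2)"
      by simp
    also have "\<dots> \<le> sqrt ((\<Sum>i<n. (a i)\<^sup>2) * (\<Sum>i<n. (b i)\<^sup>2))"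
      by (rule real_sqrt_le_mono) (rule Cauchy_Schwarz_ineq_sum)
    also have "\<dots> \<le> sqrt (A * B)"
      using a[of n] b[of n] a[of 0]
      by (intro real_sqrt_le_mono mult_mono) (auto intro: sum_nonneg)
    finally show ?thesis by (simp add: real_sqrt_mult)
  qed
  moreover have "(\<lambda>n. \<bar>\<Sum>i<n. a i * b i\<bar>) \<longlonglongrightarrow> \<bar>\<Sum>i. a i * b i\<bar>"
    using summable by (intro tendsto_rabs summable_LIMSEQ)
  ultimately show "\<bar>\<Sum>i. a i * b i\<bar> \<le> sqrt A * sqrt B"
    by (intro LIMSEQ_le_const2) auto
qed

lemma sums_binomial_div_power2: "(\<lambda>k. real ((s + k) choose k) / 2 ^ k) sums 2 ^ Suc s"
proof -
  have "(\<lambda>k. (- real (Suc s) gchoose k) * (- 1 / 2) ^ k) sums (1 + - 1 / 2) powr (- real (Suc s))"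
    by (rule gen_binomial_real) simp
  moreover have "(- real (Suc s) gchoose k) * (- 1 / 2) ^ k = real ((s + k) choose k) / 2 ^ k" for k
  proof -
    have "(- real (Suc s) gchoose k) = (- 1) ^ k * (real (Suc s) + real k - 1 gchoose k)"
      by (rule gbinomial_minus)
    also have "real (Suc s) + real k - 1 = real (s + k)"
      by simp
    finally have "(- real (Suc s) gchoose k) = (- 1) ^ k * real ((s + k) choose k)"
      by (simp only: binomial_gbinomial)
    then show ?thesis
      by (simp add: power_divide power_minus' flip: power_mult_distrib)
  qed
  moreover have "(1 + - 1 / 2 :: real) powr (- real (Suc s)) = 2 ^ Suc s"
  proof -
    have half: "(1 + - 1 / 2 :: real) = inverse 2"
      by simp
    have "(1 + - 1 / 2 :: real) powr (- real (Suc s)) = 2 powr real (Suc s)"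
      unfolding half powr_minus inverse_powr by simp
    also have "\<dots> = 2 ^ Suc s"
      by (rule powr_realpow) simp
    finally show ?thesis .
  qed
  ultimately show ?thesis by simp
qed

lemma central_binomial_le: "0 < n \<Longrightarrow> 2 * (2 * n choose n) \<le> 4 ^ n"
proof -
  assume "0 < n"
  then obtain m where n: "n = Suc m" by (cases n) auto
  have "2 * m + 1 choose m \<le> (\<Sum>k\<le>m. 2 * m + 1 choose k)"
    by (rule member_le_sum) auto
  also have "\<dots> = 2 ^ (2 * m)"
    by (rule binomial_r_part_sum)
  finally have le: "2 * m + 1 choose m \<le> 4 ^ m"
    by (simp add: power_mult)
  have "2 * n choose n = (2 * m + 1 choose m) + (2 * m + 1 choose Suc m)"
    by (simp add: n)
  also have "2 * m + 1 choose Suc m = 2 * m + 1 choose m"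
    by (subst binomial_symmetric) auto
  finally show ?thesis using le by (simp add: n)
qed

section \<open>The rescaled Hermite coefficients\<close>

definition hermite_rescale_weight :: "nat \<Rightarrow> real \<Rightarrow> nat \<Rightarrow> real" where
  "hermite_rescale_weight s t j = sqrt (fact (s + 2 * j) / fact s) * t ^ j / (fact j * 2 ^ j)"

lemma hermite_rescale_weight_0 [simp]: "hermite_rescale_weight s t 0 = 1"
  by (simp add: hermite_rescale_weight_def)

lemma hermite_rescale_weight_at_0: "hermite_rescale_weight s 0 j = (if j = 0 then 1 else 0)"
  by (simp add: hermite_rescale_weight_def)

lemma hermite_rescale_weight_square:
  "(hermite_rescale_weight s t j)\<^sup>2
     = real ((s + 2 * j) choose (2 * j)) * real ((2 * j) choose j) * t ^ (2 * j) / 4 ^ j"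
proof -
  have t_pow: "(t ^ j)\<^sup>2 = t ^ (2 * j)"
    by (metis power_mult mult.commute)
  have two_pow: "((2::real) ^ j)\<^sup>2 = 4 ^ j"
    by (simp only: power_mult[symmetric] mult.commute[of j 2]) (simp add: power_mult)
  have "(hermite_rescale_weight s t j)\<^sup>2 = fact (s + 2 * j) / fact s * t ^ (2 * j) / ((fact j)\<^sup>2 * 4 ^ j)"
    unfolding hermite_rescale_weight_def power_divide power_mult_distrib t_pow two_pow
    by simp
  also have "\<dots> = real ((s + 2 * j) choose (2 * j)) * real ((2 * j) choose j) * t ^ (2 * j) / 4 ^ j"
    by (simp add: binomial_fact mult_2 power2_eq_square)
  finally show ?thesis .
qed

lemma hermite_rescale_weight_square_le:
  assumes t: "\<bar>t\<bar> \<le> 1 / 2" and j: "0 < j"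
  shows "(hermite_rescale_weight s t j)\<^sup>2 \<le> 2 * t\<^sup>2 * (real ((s + 2 * j) choose (2 * j)) / 2 ^ (2 * j))"
proof -
  obtain i where i: "j = Suc i"
    using j by (cases j) auto
  have "real (2 * ((2 * j) choose j)) \<le> real (4 ^ j)"
    using central_binomial_le[OF j] by (simp only: of_nat_le_iff)
  then have central: "real ((2 * j) choose j) \<le> 4 ^ j / 2"
    by simp
  have "t ^ (2 * j) = t\<^sup>2 * (t\<^sup>2) ^ i"
    by (simp only: i power_mult power_Suc)
  also have "\<dots> \<le> t\<^sup>2 * (1 / 4) ^ i"
  proof -
    have "\<bar>t\<bar>\<^sup>2 \<le> (1 / 2)\<^sup>2"
      using t by (intro power_mono) auto
    then show ?thesis
      by (intro mult_left_mono power_mono) (auto simp: power_divide)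
  qed
  finally have "t ^ (2 * j) \<le> 4 * t\<^sup>2 / 4 ^ j"
    by (simp add: i power_divide)
  then have "real ((2 * j) choose j) * t ^ (2 * j) \<le> (4 ^ j / 2) * (4 * t\<^sup>2 / 4 ^ j)"
    using central by (intro mult_mono) auto
  then have key: "real ((2 * j) choose j) * t ^ (2 * j) \<le> 2 * t\<^sup>2"
    by simp
  have "(hermite_rescale_weight s t j)\<^sup>2
      = real ((s + 2 * j) choose (2 * j)) * (real ((2 * j) choose j) * t ^ (2 * j)) / 4 ^ j"
    unfolding hermite_rescale_weight_square by simp
  also have "\<dots> \<le> real ((s + 2 * j) choose (2 * j)) * (2 * t\<^sup>2) / 4 ^ j"
    using key by (intro divide_right_mono mult_left_mono) auto
  also have "\<dots> = 2 * t\<^sup>2 * (real ((s + 2 * j) choose (2 * j)) / 2 ^ (2 * j))"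
    by (simp add: power_mult)
  finally show ?thesis .
qed

lemma sum_hermite_rescale_weight_square_le:
  assumes "\<bar>t\<bar> \<le> 1 / 2"
  shows "(\<Sum>j<n. (hermite_rescale_weight s t (Suc j))\<^sup>2) \<le> 2 ^ (s + 2) * t\<^sup>2"
proof -
  define b where "b k = real ((s + k) choose k) / 2 ^ k" for k
  have b_nonneg: "0 \<le> b k" for k
    by (simp add: b_def)
  have "(\<Sum>j<n. (hermite_rescale_weight s t (Suc j))\<^sup>2) \<le> (\<Sum>j<n. 2 * t\<^sup>2 * b (2 * Suc j))"
    unfolding b_def using assms by (intro sum_mono hermite_rescale_weight_square_le) auto
  also have "\<dots> = 2 * t\<^sup>2 * (\<Sum>k\<in>(\<lambda>j. 2 * Suc j) ` {..<n}. b k)"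
    by (simp add: sum_distrib_left sum.reindex inj_on_def)
  also have "\<dots> \<le> 2 * t\<^sup>2 * suminf b"
    using sums_binomial_div_power2[of s] b_nonneg unfolding b_def
    by (intro mult_left_mono sum_le_suminf) (auto simp: sums_iff)
  also have "\<dots> = 2 ^ (s + 2) * t\<^sup>2"
    using sums_binomial_div_power2[of s] unfolding b_def by (simp add: sums_iff)
  finally show ?thesis .
qed

lemma hermite_coeff_r_eq_suminf:
  "hermite_coeff_r \<sigma> r s = (\<Sum>j. hermite_coeff \<sigma> (s + 2 * j) * hermite_rescale_weight s (r\<^sup>2 - 1) j)"
  by (simp add: hermite_coeff_r_def hermite_rescale_weight_def mult.assoc)

lemma hermite_coeff_r_1: "hermite_coeff_r \<sigma> 1 s = hermite_coeff \<sigma> s"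
proof -
  have "(\<lambda>j. hermite_coeff \<sigma> (s + 2 * j) * hermite_rescale_weight s 0 j)
      = (\<lambda>j. if j = 0 then hermite_coeff \<sigma> (s + 2 * j) else 0)"
    by (rule ext) (simp add: hermite_rescale_weight_at_0)
  then show ?thesis
    using sums_single[of 0 "\<lambda>j. hermite_coeff \<sigma> (s + 2 * j)"]
    by (simp add: hermite_coeff_r_eq_suminf sums_iff)
qed

text \<open>The hypothesis 0 < x cannot be weakened to 0 <= x, since 0 powr 0 = 0.\<close>

lemma sqrt_power_eq_powr: "0 < x \<Longrightarrow> sqrt (x ^ n) = x powr (real n / 2)"
  by (simp add: powr_half_sqrt_powr powr_realpow)

lemma hermite_coeff_r_minus_hermite_coeff_r_1:
  assumes "summable (\<lambda>j. hermite_coeff \<sigma> (s + 2 * Suc j) * hermite_rescale_weight s (r\<^sup>2 - 1) (Suc j))"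
  shows "hermite_coeff_r \<sigma> r s - hermite_coeff_r \<sigma> 1 s
           = (\<Sum>j. hermite_coeff \<sigma> (s + 2 * Suc j) * hermite_rescale_weight s (r\<^sup>2 - 1) (Suc j))"
proof -
  have "(\<lambda>j. hermite_coeff \<sigma> (s + 2 * j) * hermite_rescale_weight s (r\<^sup>2 - 1) j)
      sums ((\<Sum>j. hermite_coeff \<sigma> (s + 2 * Suc j) * hermite_rescale_weight s (r\<^sup>2 - 1) (Suc j))
            + hermite_coeff \<sigma> s)"
    using sums_Suc[OF summable_sums[OF assms]] by simp
  then show ?thesis
    unfolding hermite_coeff_r_1 by (simp add: hermite_coeff_r_eq_suminf sums_iff)
qed

lemma abs_hermite_coeff_r_minus_hermite_coeff_r_1_le:
  assumes "\<sigma> \<in> borel_measurable borel" and "integrable gauss (\<lambda>x. (\<sigma> x)\<^sup>2)"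
    and small: "\<bar>r\<^sup>2 - 1\<bar> \<le> 1 / 2"
  shows "\<bar>hermite_coeff_r \<sigma> r s - hermite_coeff_r \<sigma> 1 s\<bar>
           \<le> gnorm \<sigma> * 2 powr ((real s + 2) / 2) * \<bar>r\<^sup>2 - 1\<bar>"
proof -
  define a where "a j = hermite_coeff \<sigma> (s + 2 * Suc j)" for j
  define w where "w j = hermite_rescale_weight s (r\<^sup>2 - 1) (Suc j)" for j
  have "(\<Sum>j<n. (a j)\<^sup>2) \<le> (gnorm \<sigma>)\<^sup>2" for n
  proof -
    have "(\<Sum>j<n. (a j)\<^sup>2) = (\<Sum>k\<in>(\<lambda>j. s + 2 * Suc j) ` {..<n}. (hermite_coeff \<sigma> k)\<^sup>2)"
      by (simp add: a_def sum.reindex inj_on_def)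
    also have "\<dots> \<le> (gnorm \<sigma>)\<^sup>2"
      using assms by (intro sum_hermite_coeff_square_le) auto
    finally show ?thesis .
  qed
  moreover have "(\<Sum>j<n. (w j)\<^sup>2) \<le> 2 ^ (s + 2) * (r\<^sup>2 - 1)\<^sup>2" for n
    unfolding w_def using small by (rule sum_hermite_rescale_weight_square_le)
  ultimately have summable: "summable (\<lambda>j. a j * w j)"
    and bound: "\<bar>\<Sum>j. a j * w j\<bar> \<le> sqrt ((gnorm \<sigma>)\<^sup>2) * sqrt (2 ^ (s + 2) * (r\<^sup>2 - 1)\<^sup>2)"
    by (rule Cauchy_Schwarz_suminf)+
  have "hermite_coeff_r \<sigma> r s - hermite_coeff_r \<sigma> 1 s = (\<Sum>j. a j * w j)"
    using summable unfolding a_def w_def by (rule hermite_coeff_r_minus_hermite_coeff_r_1)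
  moreover have "sqrt ((gnorm \<sigma>)\<^sup>2) * sqrt (2 ^ (s + 2) * (r\<^sup>2 - 1)\<^sup>2)
      = gnorm \<sigma> * 2 powr ((real s + 2) / 2) * \<bar>r\<^sup>2 - 1\<bar>"
  proof -
    have "sqrt (2 ^ (s + 2) :: real) = 2 powr ((real s + 2) / 2)"
      using sqrt_power_eq_powr[of 2 "s + 2"] by (simp add: add.commute)
    moreover have "sqrt ((gnorm \<sigma>)\<^sup>2) = gnorm \<sigma>"
      by (simp add: gnorm_def)
    ultimately show ?thesis
      by (simp only: real_sqrt_mult real_sqrt_abs mult.assoc)
  qed
  ultimately show ?thesis
    using bound by simp
qed

theorem lemma23:
  fixes \<sigma> :: "real \<Rightarrow> real" and r \<epsilon> :: real and s :: nat
  assumes "\<sigma> \<in> borel_measurable borel"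
    and "bounded (range \<sigma>)"
    and "r > 0"
    and "\<epsilon> = \<bar>1 - r\<^sup>2\<bar>"
    and "\<epsilon> < 1 / 2"
  shows "\<bar>hermite_coeff_r \<sigma> r s - hermite_coeff_r \<sigma> 1 s\<bar>
           \<le> gnorm \<sigma> * 2 powr ((real s + 2) / 2) * (\<epsilon> / sqrt (1 - 2 * \<epsilon>\<^sup>2))"
proof -
  \<comment> \<open>Only r^2 enters.\<close>
  interpret prob_space gauss
    by (rule prob_space_gauss)
  have eps: "\<bar>r\<^sup>2 - 1\<bar> = \<epsilon>" "0 \<le> \<epsilon>"
    using assms(4) by auto
  have square_integrable: "integrable gauss (\<lambda>x. (\<sigma> x)\<^sup>2)"
    using assms(1,2) by (intro bounded_imp_square_integrable) measurable
  have small: "\<bar>r\<^sup>2 - 1\<bar> \<le> 1 / 2"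
    using eps(1) assms(5) by simp
  have "\<bar>hermite_coeff_r \<sigma> r s - hermite_coeff_r \<sigma> 1 s\<bar>
      \<le> gnorm \<sigma> * 2 powr ((real s + 2) / 2) * \<epsilon>"
    using abs_hermite_coeff_r_minus_hermite_coeff_r_1_le[OF assms(1) square_integrable small]
    by (simp only: eps(1))
  also have "\<dots> \<le> gnorm \<sigma> * 2 powr ((real s + 2) / 2) * (\<epsilon> / sqrt (1 - 2 * \<epsilon>\<^sup>2))"
  proof (rule mult_left_mono)
    have "\<epsilon>\<^sup>2 \<le> (1 / 2)\<^sup>2"
      using eps(2) assms(5) by (intro power_mono) auto
    then have "0 < sqrt (1 - 2 * \<epsilon>\<^sup>2)" and "sqrt (1 - 2 * \<epsilon>\<^sup>2) \<le> 1"
      by (simp_all add: power_divide)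
    then show "\<epsilon> \<le> \<epsilon> / sqrt (1 - 2 * \<epsilon>\<^sup>2)"
      using divide_left_mono[of "sqrt (1 - 2 * \<epsilon>\<^sup>2)" 1 \<epsilon>] eps(2) by simp
  qed (simp add: gnorm_def)
  finally show ?thesis .
qed

end
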